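(* Let $a$ be an element of a ring $K$ such that $l_0a^m+l_1a^{m-1}+\dots+l_{m-1}a=0$ for some positive integer $m$ and integers $l_0,\dots,l_{m-1}$ with $l_0>0$ and $\gcd(l_0,l_1,\dots,l_{m-1})=1$, and such that $d\,f(a)=0$ for some integer $d>1$ and some monic $f\in\mathbb{Z}[x]$ with $f(0)=0$. Then $\varphi(a)=0$ for some monic $\varphi\in\mathbb{Z}[x]$ with $\varphi(0)=0$ and $\deg\varphi\le m$.
   Context: Rings are associative and not necessarily unital. *)

theory Defs
  imports "HOL-Computational_Algebra.Polynomial"
begin

text \<open>Rings are associative and not necessarily unital: we use the type class ring
  (semiring with additive group, no unit). Integer multiples and positive powers are
  defined explicitly since of_int and power need a unit.\<close>

definition zsmul :: "int \<Rightarrow> 'a::ab_group_add \<Rightarrow> 'a" where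
  "zsmul k x = (if 0 \<le> k then (\<Sum>i<nat k. x) else - (\<Sum>i<nat (- k). x))"

text \<open>Positive powers: ppow a n = a^n for n \<ge> 1 (the value at n = 0 is irrelevant).\<close>
fun ppow :: "'a::semigroup_mult \<Rightarrow> nat \<Rightarrow> 'a" where
  "ppow a 0 = a"
| "ppow a (Suc 0) = a"
| "ppow a (Suc (Suc n)) = a * ppow a (Suc n)"

definition peval :: "int poly \<Rightarrow> 'a::ring \<Rightarrow> 'a" where
  "peval f a = (\<Sum>i\<in>{1..degree f}. zsmul (coeff f i) (ppow a i))"

end

theory Submission
  imports Defs "HOL-Library.Set_Algebras"
begin

text \<open>The polynomials without constant term that vanish at \<open>a\<close> form an ideal \<open>I\<close> of \<open>\<int>[x]\<close>
  containing \<open>L = l0 x^m + ... + l(m-1) x\<close> and \<open>d f\<close>. The \<open>m\<close>-th coefficients of the elements of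
  \<open>I\<close> of degree at most \<open>m\<close> form an ideal of \<open>\<int>\<close>, so it suffices that for every prime \<open>p\<close> one of
  them is prime to \<open>p\<close>. Let \<open>r\<close> be the largest index whose coefficient in \<open>L\<close> is prime to \<open>p\<close>;
  if \<open>r = m\<close>, \<open>L\<close> will do. Otherwise division by \<open>L\<close> modulo \<open>p\<close> shows that the quotient \<open>M\<close> of
  \<open>\<int>[x]\<close> by \<open>I\<close> plus the polynomials of degree at most \<open>r\<close> satisfies \<open>M = p M\<close>. Writing
  \<open>d = d' p^e\<close> with \<open>p\<close> not dividing \<open>d'\<close>, division by the monic \<open>f\<close> shows that \<open>d' M = d M\<close> is
  generated by the classes of \<open>d' x^i\<close>, \<open>i < deg f\<close>. By Nakayama's lemma some \<open>c\<close> prime to \<open>p\<close>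
  annihilates \<open>d' M\<close>, so \<open>c d' x^m\<close> is congruent modulo \<open>I\<close> to a polynomial of degree at most \<open>r\<close>,
  which yields an element of \<open>I\<close> of degree \<open>m\<close> with leading coefficient \<open>c d'\<close>.\<close>

lemma zsmul_0 [simp]: "zsmul 0 x = 0"
  by (simp add: zsmul_def)

lemma zsmul_zero_right [simp]: "zsmul k 0 = 0"
  by (simp add: zsmul_def)

lemma zsmul_1 [simp]: "zsmul 1 x = x"
  by (simp add: zsmul_def)

lemma zsmul_plus_1: "zsmul (k + 1) x = zsmul k x + x"
proof (cases "k \<ge> 0")
  case True
  then have "nat (k + 1) = Suc (nat k)"
    by simp
  with True show ?thesis
    by (simp add: zsmul_def)
next
  case False
  then have "nat (- k) = Suc (nat (- (k + 1)))"
    by simp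
  with False show ?thesis
    by (simp add: zsmul_def)
qed

lemma zsmul_minus_1: "zsmul (k - 1) x = zsmul k x - x"
  using zsmul_plus_1[of "k - 1" x] by simp

lemma zsmul_add_left: "zsmul (k + l) x = zsmul k x + zsmul l x"
proof (induction l rule: int_induct[where k = 0])
  case (step1 i)
  then show ?case
    using zsmul_plus_1[of "k + i" x] zsmul_plus_1[of i x] by (simp add: add.assoc)
next
  case (step2 i)
  have "zsmul (k + (i - 1)) x = zsmul (k + i) x - x"
    using zsmul_minus_1[of "k + i" x] by (simp add: add_diff_eq)
  then show ?case
    using step2 zsmul_minus_1[of i x] by simp
qed simp

lemma zsmul_diff_left: "zsmul (k - l) x = zsmul k x - zsmul l x"
  using zsmul_add_left[of "k - l" l x] by (simp add: eq_diff_eq)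

lemma zsmul_add_right: "zsmul k (x + y) = zsmul k x + zsmul k y"
  by (simp add: zsmul_def sum.distrib algebra_simps)

lemma zsmul_sum: "zsmul k (\<Sum>i\<in>A. f i) = (\<Sum>i\<in>A. zsmul k (f i))"
  by (induction A rule: infinite_finite_induct) (auto simp: zsmul_add_right)

lemma zsmul_mult: "zsmul (k * l) x = zsmul k (zsmul l x)"
proof (induction k rule: int_induct[where k = 0])
  case (step1 i)
  then show ?case
    by (simp add: distrib_right zsmul_add_left zsmul_plus_1)
next
  case (step2 i)
  then show ?case
    by (simp add: left_diff_distrib zsmul_diff_left)
qed simp

lemma zsmul_mult_right: "zsmul k (a * x) = a * zsmul k (x :: 'a::ring)"
  by (simp add: zsmul_def sum_distrib_left)

lemma ppow_Suc: "i \<ge> 1 \<Longrightarrow> ppow a (Suc i) = a * ppow a i"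
  by (cases i) auto

lemma peval_eq_sum_atLeastAtMost:
  assumes "degree g \<le> N"
  shows "peval g a = (\<Sum>i=1..N. zsmul (coeff g i) (ppow a i))"
  unfolding peval_def
  by (rule sum.mono_neutral_left) (use assms in \<open>auto simp: coeff_eq_0\<close>)

lemma peval_0 [simp]: "peval 0 a = 0"
  by (simp add: peval_def)

lemma peval_add: "peval (g + h) a = peval g a + peval h a"
proof -
  let ?N = "max (degree g) (degree h)"
  have "degree (g + h) \<le> ?N"
    by (rule degree_add_le_max)
  then show ?thesis
    by (simp add: peval_eq_sum_atLeastAtMost[of _ ?N] zsmul_add_left sum.distrib)
qed

lemma peval_sum: "peval (\<Sum>i\<in>A. g i) a = (\<Sum>i\<in>A. peval (g i) a)"
  by (induction A rule: infinite_finite_induct) (auto simp: peval_add)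

lemma peval_smult: "peval (smult c g) a = zsmul c (peval g a)"
  by (simp add: peval_eq_sum_atLeastAtMost[of _ "degree g"] degree_smult_le zsmul_mult zsmul_sum)

lemma peval_monom:
  assumes "k \<ge> 1"
  shows "peval (monom c k) a = zsmul c (ppow a k)"
proof -
  have "peval (monom c k) a = (\<Sum>i=1..k. zsmul (coeff (monom c k) i) (ppow a i))"
    by (rule peval_eq_sum_atLeastAtMost[OF degree_monom_le])
  also have "\<dots> = (\<Sum>i=1..k. if i = k then zsmul c (ppow a i) else 0)"
    by (rule sum.cong) (auto simp: coeff_monom)
  finally show ?thesis
    using assms by simp
qed

lemma peval_pCons_0:
  assumes "coeff g 0 = 0"
  shows "peval (pCons 0 g) a = a * peval g a"
proof -
  let ?N = "degree g"
  have "peval (pCons 0 g) a = (\<Sum>i=Suc 0..Suc ?N. zsmul (coeff (pCons 0 g) i) (ppow a i))"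
    using peval_eq_sum_atLeastAtMost[of "pCons 0 g" "Suc ?N" a] by (simp add: degree_pCons_le)
  also have "\<dots> = (\<Sum>i=0..?N. zsmul (coeff g i) (ppow a (Suc i)))"
    by (subst sum.shift_bounds_cl_Suc_ivl) simp
  also have "\<dots> = (\<Sum>i=1..?N. zsmul (coeff g i) (ppow a (Suc i)))"
    using assms by (simp add: sum.atLeast_Suc_atMost[of 0])
  also have "\<dots> = (\<Sum>i=1..?N. a * zsmul (coeff g i) (ppow a i))"
    by (rule sum.cong) (auto simp: ppow_Suc zsmul_mult_right)
  also have "\<dots> = a * peval g a"
    by (simp add: peval_def sum_distrib_left)
  finally show ?thesis .
qed

lemma smult_sum_right: "smult c (\<Sum>i\<in>A. f i) = (\<Sum>i\<in>A. smult c (f i))"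
  by (induction A rule: infinite_finite_induct) (auto simp: smult_add_right)

lemma sum_monom_coeff_lessThan:
  assumes "w = 0 \<or> degree w < n"
  shows "(\<Sum>i<n. monom (coeff w i) i) = w"
  using assms by (auto simp: poly_eq_iff coeff_sum coeff_monom coeff_eq_0)

lemma coeff_sum_monom_diff:
  "coeff (\<Sum>i<m. monom (l i) (m - i)) k = (if 0 < k \<and> k \<le> m then l (m - k) else 0)"
proof -
  have "coeff (\<Sum>i<m. monom (l i) (m - i)) k = (\<Sum>i<m. if i = m - k \<and> 0 < k \<and> k \<le> m then l i else 0)"
    unfolding coeff_sum by (rule sum.cong) (auto simp: coeff_monom)
  then show ?thesis
    by (auto simp: sum.delta)
qed

lemma degree_less_if_coeff_eq_0:
  "degree g \<le> k \<Longrightarrow> coeff g k = 0 \<Longrightarrow> 0 < k \<Longrightarrow> degree g < k"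
  by (metis degree_0 le_neq_implies_less leading_coeff_0_iff)

lemma exists_last_coeff_not_dvd:
  fixes L :: "'a::comm_semiring_1 poly"
  assumes "degree L \<le> m" and "\<exists>k\<le>m. \<not> p dvd coeff L k"
  obtains r where "r \<le> m" and "\<not> p dvd coeff L r" and "\<And>j. r < j \<Longrightarrow> p dvd coeff L j"
proof -
  define r where "r = Max {k. k \<le> m \<and> \<not> p dvd coeff L k}"
  have "r \<le> m" and "\<not> p dvd coeff L r"
    using Max_in[of "{k. k \<le> m \<and> \<not> p dvd coeff L k}"] assms(2) unfolding r_def by auto
  moreover have "p dvd coeff L j" if "r < j" for j
  proof (rule ccontr)
    assume "\<not> p dvd coeff L j"
    moreover from this have "j \<le> m"
      using assms(1) by (metis coeff_eq_0 dvd_0_right le_less_trans not_le)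
    ultimately have "j \<le> r"
      unfolding r_def by (intro Max_ge) auto
    with that show False
      by simp
  qed
  ultimately show ?thesis
    using that by blast
qed

lemma exists_not_dvd_if_Gcd_eq_1:
  fixes A :: "int set"
  assumes "Gcd A = 1" and "prime p"
  shows "\<exists>x\<in>A. \<not> p dvd x"
proof (rule ccontr)
  assume "\<not> ?thesis"
  then have "p dvd Gcd A"
    by (auto intro: Gcd_greatest)
  with assms show False
    using prime_gt_1_int[of p] by simp
qed

lemma one_mem_if_no_common_prime_divisor:
  fixes C :: "int set"
  assumes closed: "\<And>x y k. x \<in> C \<Longrightarrow> y \<in> C \<Longrightarrow> x - k * y \<in> C"
    and c: "c \<in> C" "c \<noteq> 0"
    and no_common: "\<And>p. prime p \<Longrightarrow> \<exists>x\<in>C. \<not> p dvd x"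
  shows "1 \<in> C"
proof -
  define \<gamma> where "\<gamma> = (LEAST n. 0 < n \<and> int n \<in> C)"
  have "\<bar>c\<bar> \<in> C"
    using closed[OF c(1) c(1), of 2] c(1) by (cases "c < 0") auto
  then have "0 < nat \<bar>c\<bar> \<and> int (nat \<bar>c\<bar>) \<in> C"
    using c(2) by simp
  then have \<gamma>: "0 < \<gamma> \<and> int \<gamma> \<in> C"
    unfolding \<gamma>_def by (rule LeastI)
  have dvd: "int \<gamma> dvd x" if "x \<in> C" for x
  proof -
    have "x mod int \<gamma> \<in> C"
      using closed[OF that conjunct2[OF \<gamma>], of "x div int \<gamma>"] by (simp add: minus_div_mult_eq_mod)
    moreover have "0 \<le> x mod int \<gamma>" and "x mod int \<gamma> < int \<gamma>"
      using \<gamma> by simp_all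
    moreover from this have "nat (x mod int \<gamma>) < \<gamma>"
      by (simp add: nat_less_iff)
    then have "\<not> (0 < nat (x mod int \<gamma>) \<and> int (nat (x mod int \<gamma>)) \<in> C)"
      unfolding \<gamma>_def by (rule not_less_Least)
    ultimately have "x mod int \<gamma> = 0"
      by simp
    then show ?thesis
      by (simp add: dvd_eq_mod_eq_0)
  qed
  have "\<gamma> = 1"
  proof (rule ccontr)
    assume "\<gamma> \<noteq> 1"
    then obtain p :: nat where "prime p" "p dvd \<gamma>"
      using prime_factor_nat by blast
    then obtain x where "x \<in> C" "\<not> int p dvd x"
      using no_common[of "int p"] by auto
    then show False
      using dvd \<open>p dvd \<gamma>\<close> by (meson dvd_trans int_dvd_int_iff)
  qed
  then show ?thesis
    using \<gamma> by simp
qed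

locale int_poly_submodule =
  fixes S :: "int poly set"
  assumes zero_mem [simp]: "0 \<in> S"
    and add_mem: "x \<in> S \<Longrightarrow> y \<in> S \<Longrightarrow> x + y \<in> S"
    and smult_mem: "x \<in> S \<Longrightarrow> smult c x \<in> S"
begin

lemma diff_mem: "x \<in> S \<Longrightarrow> y \<in> S \<Longrightarrow> x - y \<in> S"
  using add_mem[of x "smult (- 1) y"] smult_mem[of y "- 1"] by simp

lemma sum_mem: "(\<And>i. i \<in> A \<Longrightarrow> f i \<in> S) \<Longrightarrow> (\<Sum>i\<in>A. f i) \<in> S"
  by (induction A rule: infinite_finite_induct) (auto intro: add_mem)

end

locale int_poly_ideal = int_poly_submodule I for I +
  assumes mult_mem: "x \<in> I \<Longrightarrow> q * x \<in> I"

lemma int_poly_submodule_set_plus: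
  assumes "int_poly_submodule A" "int_poly_submodule B"
  shows "int_poly_submodule (A + B)"
proof -
  interpret A: int_poly_submodule A by fact
  interpret B: int_poly_submodule B by fact
  show ?thesis
  proof
    show "0 \<in> A + B"
      using set_plus_intro[OF A.zero_mem B.zero_mem] by simp
    show "x + y \<in> A + B" if x: "x \<in> A + B" and y: "y \<in> A + B" for x y
    proof -
      obtain a b where "x = a + b" "a \<in> A" "b \<in> B"
        using x by (rule set_plus_elim)
      moreover obtain a' b' where "y = a' + b'" "a' \<in> A" "b' \<in> B"
        using y by (rule set_plus_elim)
      ultimately have "x + y = (a + a') + (b + b')" and "a + a' \<in> A" and "b + b' \<in> B"
        by (simp_all add: A.add_mem B.add_mem algebra_simps)
      then show ?thesis
        by auto
    qed
    show "smult c x \<in> A + B" if "x \<in> A + B" for c x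
      using that
      by (auto elim!: set_plus_elim simp: smult_add_right intro!: set_plus_intro A.smult_mem B.smult_mem)
  qed
qed

lemma int_poly_ideal_set_plus:
  assumes "int_poly_ideal A" "int_poly_ideal B"
  shows "int_poly_ideal (A + B)"
proof -
  interpret A: int_poly_ideal A by fact
  interpret B: int_poly_ideal B by fact
  show ?thesis
  proof (rule int_poly_ideal.intro)
    show "int_poly_submodule (A + B)"
      by (rule int_poly_submodule_set_plus) unfold_locales
    show "int_poly_ideal_axioms (A + B)"
      by unfold_locales
        (auto elim!: set_plus_elim simp: distrib_left intro!: set_plus_intro A.mult_mem B.mult_mem)
  qed
qed

lemma int_poly_ideal_range_smult: "int_poly_ideal (range (smult q))"
proof unfold_locales
  show "0 \<in> range (smult q)"
    using rangeI[of "smult q" 0] by simp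
  show "x + y \<in> range (smult q)" if "x \<in> range (smult q)" "y \<in> range (smult q)" for x y
    using that by (auto simp flip: smult_add_right)
  show "smult c x \<in> range (smult q)" if "x \<in> range (smult q)" for c x
    using that by (metis mult.commute rangeE rangeI smult_smult)
  show "p * x \<in> range (smult q)" if "x \<in> range (smult q)" for p x
    using that by (metis mult_smult_right rangeE rangeI)
qed

lemma int_poly_submodule_degree_le: "int_poly_submodule {y. degree y \<le> r}"
  by unfold_locales (auto intro: degree_add_le le_trans[OF degree_smult_le])

lemma int_poly_submodule_range_smult_left: "int_poly_submodule (range (\<lambda>c. smult c h))"
  by unfold_locales (auto simp flip: smult_add_left)

lemma annihilator_int_poly_ideal: "int_poly_ideal {g. poly g 0 = 0 \<and> peval g a = 0}"
proof
  let ?I = "{g. poly g 0 = 0 \<and> peval g a = 0}"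
  show "0 \<in> ?I"
    by simp
  show "g + h \<in> ?I" if "g \<in> ?I" "h \<in> ?I" for g h
    using that by (simp add: peval_add)
  show "smult c g \<in> ?I" if "g \<in> ?I" for c g
    using that by (simp add: peval_smult)
  show "q * g \<in> ?I" if g: "g \<in> ?I" for q g
  proof (induction q)
    case (pCons c q)
    from pCons.IH have "coeff (q * g) 0 = 0" and "peval (q * g) a = 0"
      by (auto simp flip: poly_0_coeff_0)
    then have "pCons 0 (q * g) \<in> ?I"
      by (simp add: peval_pCons_0)
    moreover have "pCons c q * g = smult c g + pCons 0 (q * g)"
      by simp
    ultimately show ?case
      using g by (simp add: peval_add peval_smult)
  qed simp
qed

lemma int_poly_nakayama_step:
  fixes hs :: "nat \<Rightarrow> int poly"
  assumes "int_poly_submodule S" and p: "prime p" and c': "\<not> p dvd c'"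
    and c'_hs: "\<And>j. j < n \<Longrightarrow> smult c' (hs j) \<in> S + range (\<lambda>k. smult k (hs n))"
    and cs: "hs n - smult p (\<Sum>i<Suc n. smult (cs i) (hs i)) \<in> S"
  shows "\<exists>c. \<not> p dvd c \<and> (\<forall>j<Suc n. smult c (hs j) \<in> S)"
proof -
  interpret S: int_poly_submodule S by fact
  have "\<forall>j. \<exists>s t. j < n \<longrightarrow> s \<in> S \<and> smult c' (hs j) = s + smult t (hs n)"
    using c'_hs by (blast elim: set_plus_elim)
  then obtain s t where st: "\<And>j. j < n \<Longrightarrow> s j \<in> S \<and> smult c' (hs j) = s j + smult (t j) (hs n)"
    by metis
  define A where "A = (\<Sum>i<Suc n. smult (cs i) (hs i))"
  define B where "B = (\<Sum>i<n. smult (cs i) (s i))"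
  define T where "T = (\<Sum>i<n. cs i * t i)"
  define c'' where "c'' = c' - p * (T + c' * cs n)"
  have "(\<Sum>i<n. smult (cs i) (smult c' (hs i))) = (\<Sum>i<n. smult (cs i) (s i) + smult (cs i * t i) (hs n))"
    by (rule sum.cong) (simp_all add: st smult_add_right)
  also have "\<dots> = B + smult T (hs n)"
    unfolding B_def T_def by (simp add: sum.distrib smult_sum)
  finally have A: "smult c' A = B + smult (T + c' * cs n) (hs n)"
    unfolding A_def by (simp add: smult_sum_right smult_add_right smult_add_left mult.commute)
  have "smult c' (hs n - smult p A) + smult p B = smult c' (hs n) - smult p (smult c' A - B)"
    by (simp add: smult_diff_right mult.commute)
  also have "\<dots> = smult c'' (hs n)"
    unfolding A c''_def by (simp add: smult_diff_left)
  finally have "smult c' (hs n - smult p A) + smult p B = smult c'' (hs n)" .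
  moreover have "B \<in> S"
    unfolding B_def using st by (intro S.sum_mem S.smult_mem) simp
  ultimately have c''_hs: "smult c'' (hs n) \<in> S"
    using cs unfolding A_def by (metis S.add_mem S.smult_mem)
  have "\<not> p dvd c''"
  proof
    assume "p dvd c''"
    then have "p dvd c'' + p * (T + c' * cs n)"
      by simp
    with c' show False
      by (simp add: c''_def)
  qed
  moreover have "smult (c' * c'') (hs j) \<in> S" if "j < Suc n" for j
  proof (cases "j < n")
    case True
    have "smult (c' * c'') (hs j) = smult c'' (smult c' (hs j))"
      by (simp add: mult.commute)
    also have "\<dots> = smult c'' (s j) + smult (t j) (smult c'' (hs n))"
      by (simp add: st[OF True] smult_add_right mult.commute)
    finally show ?thesis
      using st[OF True] c''_hs by (metis S.add_mem S.smult_mem)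
  next
    case False
    with that have "j = n"
      by simp
    then show ?thesis
      using S.smult_mem[OF c''_hs, of c'] by simp
  qed
  ultimately show ?thesis
    using c' p by (metis prime_dvd_mult_iff)
qed

lemma int_poly_nakayama:
  fixes hs :: "nat \<Rightarrow> int poly"
  assumes "int_poly_submodule S" and p: "prime p"
    and "\<And>j. j < n \<Longrightarrow> \<exists>cs. hs j - smult p (\<Sum>i<n. smult (cs i) (hs i)) \<in> S"
  shows "\<exists>c. \<not> p dvd c \<and> (\<forall>j<n. smult c (hs j) \<in> S)"
  using assms(1,3)
proof (induction n arbitrary: S)
  case 0
  show ?case
    using p by (intro exI[of _ 1]) (auto simp: not_prime_unit)
next
  case (Suc n)
  let ?S' = "S + range (\<lambda>k. smult k (hs n))"
  have "\<exists>cs. hs j - smult p (\<Sum>i<n. smult (cs i) (hs i)) \<in> ?S'" if "j < n" for j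
  proof -
    obtain cs where "hs j - smult p (\<Sum>i<Suc n. smult (cs i) (hs i)) \<in> S"
      using Suc.prems(2)[of j] \<open>j < n\<close> by auto
    moreover have "hs j - smult p (\<Sum>i<n. smult (cs i) (hs i)) =
        (hs j - smult p (\<Sum>i<Suc n. smult (cs i) (hs i))) + smult (p * cs n) (hs n)"
      by (simp add: smult_add_right)
    ultimately have "hs j - smult p (\<Sum>i<n. smult (cs i) (hs i)) \<in> ?S'"
      by (simp only:) (rule set_plus_intro[OF _ rangeI])
    then show ?thesis
      by blast
  qed
  then obtain c' where "\<not> p dvd c'" and "\<And>j. j < n \<Longrightarrow> smult c' (hs j) \<in> ?S'"
    using Suc.IH int_poly_submodule_set_plus[OF Suc.prems(1) int_poly_submodule_range_smult_left]
    by blast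
  moreover obtain cs where "hs n - smult p (\<Sum>i<Suc n. smult (cs i) (hs i)) \<in> S"
    using Suc.prems(2) by blast
  ultimately show ?case
    by (rule int_poly_nakayama_step[OF Suc.prems(1) p])
qed

context int_poly_ideal
begin

lemma reduce_degree:
  assumes q: "\<And>z. smult q z \<in> I" and L: "L \<in> I" and unit: "coprime q (lead_coeff L)"
  shows "\<exists>y. degree y \<le> degree L \<and> g - y \<in> I"
proof (induction "degree g" arbitrary: g rule: less_induct)
  case less
  show ?case
  proof (cases "degree g \<le> degree L")
    case True
    then show ?thesis
      by (intro exI[of _ g]) simp
  next
    case False
    define k where "k = degree g"
    define c where "c = lead_coeff g"
    obtain s t where st: "s * q + t * lead_coeff L = 1"
      using bezout_int[of q "lead_coeff L"] unit by (auto simp: coprime_iff_gcd_eq_1)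
    define h where "h = smult (c * t) (monom 1 (k - degree L) * L) + smult q (monom (c * s) k)"
    have "h \<in> I"
      unfolding h_def by (rule add_mem[OF smult_mem[OF mult_mem[OF L]] q])
    have "coeff (monom 1 (k - degree L) * L) k = lead_coeff L"
      using False unfolding k_def by (simp add: coeff_monom_mult)
    then have "coeff h k = c"
      using st unfolding h_def by (simp add: algebra_simps flip: distrib_left)
    moreover have "degree h \<le> k"
      unfolding h_def using False k_def
      by (intro degree_add_le le_trans[OF degree_smult_le] le_trans[OF degree_mult_le])
        (auto simp: degree_monom_eq degree_monom_le)
    ultimately have "degree (g - h) < k"
      using False unfolding k_def c_def
      by (intro degree_less_if_coeff_eq_0 le_trans[OF degree_diff_le_max]) auto
    then obtain y where "degree y \<le> degree L" "g - h - y \<in> I"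
      using less k_def by blast
    moreover have "g - y = (g - h - y) + h"
      by simp
    ultimately show ?thesis
      using \<open>h \<in> I\<close> by (metis add_mem)
  qed
qed

lemma reduce_mod_prime:
  assumes p: "prime p" and L: "L \<in> I" and unit: "\<not> p dvd coeff L r"
    and high: "\<And>j. r < j \<Longrightarrow> p dvd coeff L j"
  shows "\<exists>y. degree y \<le> r \<and> g - y \<in> I + range (smult p)"
proof -
  let ?J = "I + range (smult p)"
  interpret J: int_poly_ideal ?J
    by (intro int_poly_ideal_set_plus int_poly_ideal_axioms int_poly_ideal_range_smult)
  have smult_J: "smult p z \<in> ?J" for z
    using set_plus_intro[OF zero_mem rangeI] by simp
  txt \<open>Modulo \<open>p\<close>, \<open>L\<close> agrees with its truncation \<open>L'\<close> below degree \<open>r + 1\<close>, whose leading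
    coefficient is prime to \<open>p\<close>.\<close>
  define L' where "L' = poly_cutoff (Suc r) L"
  have "[:p:] dvd L - L'"
    by (auto simp: const_poly_dvd_iff L'_def coeff_poly_cutoff intro: high)
  then obtain H where "L - L' = smult p H"
    by (auto elim: dvdE)
  then have "L' = L + smult p (- H)"
    by (simp add: algebra_simps)
  moreover have "L \<in> ?J"
    using set_plus_intro[OF L rangeI, of "smult p" 0] by simp
  ultimately have "L' \<in> ?J"
    by (metis J.add_mem smult_J)
  moreover have "degree L' = r"
  proof (rule antisym)
    show "degree L' \<le> r"
      by (rule degree_le) (simp add: L'_def coeff_poly_cutoff)
    show "r \<le> degree L'"
      using unit by (intro le_degree) (auto simp: L'_def coeff_poly_cutoff)
  qed
  moreover have "coprime p (lead_coeff L')"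
    using \<open>degree L' = r\<close> p unit by (simp add: L'_def coeff_poly_cutoff prime_imp_coprime)
  ultimately show ?thesis
    using J.reduce_degree[OF smult_J] by metis
qed

lemma reduce_mod_prime_power:
  assumes p: "prime p" and L: "L \<in> I" and unit: "\<not> p dvd coeff L r"
    and high: "\<And>j. r < j \<Longrightarrow> p dvd coeff L j"
  shows "\<exists>y. degree y \<le> r \<and> g - y \<in> I + range (smult (p ^ N))"
proof (induction N arbitrary: g)
  case 0
  have "g = 0 + smult 1 g"
    by simp
  then show ?case
    by (metis degree_0 diff_zero rangeI set_plus_intro zero_le zero_mem power_0)
next
  case (Suc N)
  obtain y i z where "degree y \<le> r" "i \<in> I" "g - y = i + smult (p ^ N) z"
    using Suc.IH[of g] by (auto elim!: set_plus_elim)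
  moreover obtain y' i' z' where "degree y' \<le> r" "i' \<in> I" "z - y' = i' + smult p z'"
    using reduce_mod_prime[OF assms, of z] by (auto elim!: set_plus_elim)
  ultimately have "g - (y + smult (p ^ N) y') = (i + smult (p ^ N) i') + smult (p ^ Suc N) z'"
    and "degree (y + smult (p ^ N) y') \<le> r" and "i + smult (p ^ N) i' \<in> I"
    by (auto simp: algebra_simps smult_add_right smult_diff_right eq_diff_eq
        intro!: add_mem smult_mem degree_add_le le_trans[OF degree_smult_le])
  then show ?case
    by (metis rangeI set_plus_intro)
qed

lemma smult_mem_degree_le_plus_span:
  assumes reduce: "\<And>g. \<exists>y. degree y \<le> r \<and> g - y \<in> I + range (smult (p * q))"
    and f: "lead_coeff f = 1" and df: "smult (d * q) f \<in> I"
  shows "\<exists>cs. smult d g - smult p (\<Sum>i<degree f. smult (cs i) (monom d i)) \<in> I + {y. degree y \<le> r}"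
proof -
  obtain y i z where y: "degree y \<le> r" and i: "i \<in> I" and z: "g - y = i + smult (p * q) z"
    using reduce[of g] by (auto elim!: set_plus_elim)
  obtain u w where uw: "pseudo_divmod z f = (u, w)"
    by fastforce
  have "f \<noteq> 0"
    using f by auto
  then have zfw: "z = f * u + w" and w: "w = 0 \<or> degree w < degree f"
    using pseudo_divmod[OF _ uw] f by simp_all
  define cs where "cs i = q * coeff w i" for i
  have "(\<Sum>i<degree f. smult (cs i) (monom d i)) = smult (d * q) (\<Sum>i<degree f. monom (coeff w i) i)"
    by (simp add: cs_def smult_sum_right smult_monom mult_ac)
  also have "\<dots> = smult (d * q) w"
    using w by (simp add: sum_monom_coeff_lessThan)
  moreover have "g = y + i + smult (p * q) (f * u) + smult (p * q) w"
    using z unfolding zfw by (simp add: smult_add_right eq_diff_eq[symmetric] add.assoc)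
  ultimately have "smult d g - smult p (\<Sum>i<degree f. smult (cs i) (monom d i)) =
      (smult d i + smult p (u * smult (d * q) f)) + smult d y"
    by (simp add: smult_add_right mult_smult_right mult.commute mult.left_commute)
  moreover have "smult d i + smult p (u * smult (d * q) f) \<in> I"
    by (rule add_mem[OF smult_mem[OF i] smult_mem[OF mult_mem[OF df]]])
  moreover have "degree (smult d y) \<le> r"
    using y by (meson degree_smult_le le_trans)
  ultimately show ?thesis
    by (metis mem_Collect_eq set_plus_intro)
qed

lemma exists_mem_coeff_eq_if_monom_mem:
  assumes "monom c m \<in> I + {y. degree y \<le> r}" and "r < m"
  shows "\<exists>g\<in>I. degree g \<le> m \<and> coeff g m = c"
proof -
  obtain g y where "monom c m = g + y" "g \<in> I" "degree y \<le> r"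
    using assms(1) by (auto elim: set_plus_elim)
  moreover from this have g: "g = monom c m - y"
    by (simp add: eq_diff_eq)
  ultimately have "degree g \<le> m" and "coeff g m = c"
    using \<open>r < m\<close> by (auto simp: coeff_eq_0 intro!: degree_diff_le degree_monom_le)
  with \<open>g \<in> I\<close> show ?thesis
    by blast
qed

lemma exists_mem_coeff_not_dvd_above:
  assumes p: "prime p" and L: "L \<in> I" and unit: "\<not> p dvd coeff L r"
    and high: "\<And>j. r < j \<Longrightarrow> p dvd coeff L j" and "r < m"
    and d: "d \<noteq> 0" and f: "lead_coeff f = 1" and df: "smult d f \<in> I"
  shows "\<exists>g\<in>I. degree g \<le> m \<and> \<not> p dvd coeff g m"
proof -
  obtain d' e where d': "d = d' * p ^ e" "\<not> p dvd d'"
    using multiplicity_decompose'[of d p] d p by (metis mult.commute not_prime_unit)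
  define S where "S = I + {y. degree y \<le> r}"
  interpret S: int_poly_submodule S
    unfolding S_def by (intro int_poly_submodule_set_plus int_poly_submodule_degree_le int_poly_submodule_axioms)
  have span: "\<exists>cs. smult d' g - smult p (\<Sum>i<degree f. smult (cs i) (monom d' i)) \<in> S" for g
    unfolding S_def
  proof (rule smult_mem_degree_le_plus_span)
    show "\<exists>y. degree y \<le> r \<and> g - y \<in> I + range (smult (p * p ^ e))" for g
      using reduce_mod_prime_power[OF p L unit high, of g "Suc e"] by simp
  qed (use f df d' in simp_all)
  have "\<exists>cs. monom d' j - smult p (\<Sum>i<degree f. smult (cs i) (monom d' i)) \<in> S" for j
    using span[of "monom 1 j"] by (simp add: smult_monom)
  then obtain c where c: "\<not> p dvd c" and c_S: "\<And>j. j < degree f \<Longrightarrow> smult c (monom d' j) \<in> S"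
    using int_poly_nakayama[OF S.int_poly_submodule_axioms p] by blast
  obtain cs where cs: "smult d' (monom 1 m) - smult p (\<Sum>i<degree f. smult (cs i) (monom d' i)) \<in> S"
    using span by blast
  have "monom (c * d') m = smult c (smult d' (monom 1 m) - smult p (\<Sum>i<degree f. smult (cs i) (monom d' i)))
      + smult p (\<Sum>i<degree f. smult (cs i) (smult c (monom d' i)))"
    by (simp add: smult_diff_right smult_sum_right smult_monom mult_ac)
  also have "\<dots> \<in> S"
    by (rule S.add_mem[OF S.smult_mem[OF cs] S.smult_mem[OF S.sum_mem]]) (intro S.smult_mem c_S, simp)
  finally obtain g where "g \<in> I" "degree g \<le> m" "coeff g m = c * d'"
    using exists_mem_coeff_eq_if_monom_mem \<open>r < m\<close> unfolding S_def by blast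
  moreover have "\<not> p dvd c * d'"
    using c d' p by (simp add: prime_dvd_mult_iff)
  ultimately show ?thesis
    by auto
qed

lemma exists_mem_coeff_not_dvd:
  assumes p: "prime p" and L: "L \<in> I" "degree L \<le> m" and "\<exists>k\<le>m. \<not> p dvd coeff L k"
    and "d \<noteq> 0" and "lead_coeff f = 1" and "smult d f \<in> I"
  shows "\<exists>g\<in>I. degree g \<le> m \<and> \<not> p dvd coeff g m"
proof -
  obtain r where "r \<le> m" and unit: "\<not> p dvd coeff L r" and high: "\<And>j. r < j \<Longrightarrow> p dvd coeff L j"
    using exists_last_coeff_not_dvd[OF L(2) assms(4)] by blast
  show ?thesis
  proof (cases "r = m")
    case True
    then show ?thesis
      using L unit by blast
  next
    case False
    with \<open>r \<le> m\<close> have "r < m"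
      by simp
    with assms(5-7) show ?thesis
      by (intro exists_mem_coeff_not_dvd_above[OF p L(1) unit high])
  qed
qed

lemma exists_monic_mem:
  assumes L: "L \<in> I" "degree L \<le> m" "coeff L m \<noteq> 0"
    and coeffs: "\<And>p. prime p \<Longrightarrow> \<exists>g\<in>I. degree g \<le> m \<and> \<not> p dvd coeff g m"
  shows "\<exists>\<phi>\<in>I. lead_coeff \<phi> = 1 \<and> degree \<phi> = m"
proof -
  define C where "C = {coeff g m |g. g \<in> I \<and> degree g \<le> m}"
  have "x - k * y \<in> C" if x: "x \<in> C" and y: "y \<in> C" for x y k
  proof -
    obtain g h where "g \<in> I" "degree g \<le> m" "x = coeff g m" "h \<in> I" "degree h \<le> m" "y = coeff h m"
      using x y unfolding C_def by blast
    then have "g - smult k h \<in> I" and "degree (g - smult k h) \<le> m"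
      and "x - k * y = coeff (g - smult k h) m"
      by (simp_all add: diff_mem smult_mem degree_diff_le le_trans[OF degree_smult_le])
    then show ?thesis
      unfolding C_def by blast
  qed
  moreover have "coeff L m \<in> C"
    using L unfolding C_def by blast
  moreover have "\<exists>x\<in>C. \<not> p dvd x" if "prime p" for p
    using coeffs[OF that] unfolding C_def by blast
  ultimately have "1 \<in> C"
    by (rule one_mem_if_no_common_prime_divisor[OF _ _ L(3)])
  then obtain \<phi> where "\<phi> \<in> I" "degree \<phi> \<le> m" "coeff \<phi> m = 1"
    unfolding C_def by force
  moreover from this have "degree \<phi> = m"
    using le_degree[of \<phi> m] by simp
  ultimately show ?thesis
    by auto
qed

end

theorem lemma9:
  fixes a :: "'a::ring" and m :: nat and l :: "nat \<Rightarrow> int" and d :: int and f :: "int poly"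
  assumes "m > 0"
    and "l 0 > 0"
    and "Gcd (l ` {..<m}) = 1"
    and "(\<Sum>i<m. zsmul (l i) (ppow a (m - i))) = 0"
    and "d > 1"
    and "lead_coeff f = 1"
    and "poly f 0 = 0"
    and "zsmul d (peval f a) = 0"
  shows "\<exists>\<phi> :: int poly. lead_coeff \<phi> = 1 \<and> poly \<phi> 0 = 0 \<and> degree \<phi> \<le> m \<and> peval \<phi> a = 0"
proof -
  define I where "I = {g. poly g 0 = 0 \<and> peval g a = 0}"
  interpret int_poly_ideal I
    unfolding I_def by (rule annihilator_int_poly_ideal)
  define L where "L = (\<Sum>i<m. monom (l i) (m - i))"
  have coeff_L: "coeff L k = (if 0 < k \<and> k \<le> m then l (m - k) else 0)" for k
    unfolding L_def by (rule coeff_sum_monom_diff)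
  have deg_L: "degree L \<le> m"
    by (rule degree_le) (simp add: coeff_L)
  have "L \<in> I"
    using assms(4) unfolding I_def
    by (simp add: L_def peval_sum peval_monom poly_0_coeff_0 coeff_sum_monom_diff)
  have "smult d f \<in> I"
    using assms(7,8) unfolding I_def by (simp add: peval_smult)
  have "\<exists>k\<le>m. \<not> p dvd coeff L k" if p: "prime p" for p
  proof -
    obtain i where "i < m" "\<not> p dvd l i"
      using exists_not_dvd_if_Gcd_eq_1[OF assms(3) p] by blast
    then show ?thesis
      by (intro exI[of _ "m - i"]) (simp add: coeff_L)
  qed
  then have "\<exists>g\<in>I. degree g \<le> m \<and> \<not> p dvd coeff g m" if "prime p" for p
    by (rule exists_mem_coeff_not_dvd[OF that \<open>L \<in> I\<close> deg_L _ _ assms(6) \<open>smult d f \<in> I\<close>])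
      (use that assms(5) in simp_all)
  moreover have "coeff L m \<noteq> 0"
    using assms(1,2) by (simp add: coeff_L)
  ultimately obtain \<phi> where "\<phi> \<in> I" "lead_coeff \<phi> = 1" "degree \<phi> = m"
    using exists_monic_mem[OF \<open>L \<in> I\<close> deg_L] by blast
  then show ?thesis
    unfolding I_def by auto
qed

end
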